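(* Let $N_1$ and $N_2$ be Petri nets. If $N_1\approx^\Delta_{bSTb}N_2$ then $N_1\approx_{\mathscr F}N_2$.
   Context: Fix visible actions $\mathrm{Act}$ and $\tau\notin\mathrm{Act}$. A Petri net $N=(S,T,F,M_0,\ell)$ has disjoint $S,T$, $F:(S\times T)\cup(T\times S)\to\mathbb N$, $M_0\in\mathbb N^S$, $\ell:T\to\mathrm{Act}\cup\{\tau\}$. ${}^\bullet x(y)=F(y,x)$, $x^\bullet(y)=F(x,y)$, extended additively to finite multisets. For finite nonempty multiset $G$ of transitions, $M[G\rangle M'$ iff ${}^\bullet G\le M$ and $M'=M-{}^\bullet G+G^\bullet$. Step failures equivalence: $M\xrightarrow{\alpha}M'$ iff $M[t\rangle M'$ with $\ell(t)=\alpha$; $\Rightarrow$ is the reflexive transitive closure of $\xrightarrow{\tau}$; $M\overset{a_1\cdots a_n}{\Longrightarrow}M'$ iff $M\Rightarrow\xrightarrow{a_1}\Rightarrow\cdots\xrightarrow{a_n}\Rightarrow M'$. For a step $A$ (finite nonempty multiset over $\mathrm{Act}$), $M\xrightarrow{A}$ iff $M[G\rangle$ for a finite multiset $G$ of transitions, none labelled $\tau$, with label multiset $A$. $(\sigma,X)$ with $\sigma\in\mathrm{Act}^*$ and $X$ a finite set of steps is a step failure pair iff some $M$ has $M_0\overset{\sigma}{\Longrightarrow}M$, $M\not\xrightarrow{\tau}$ and $M\not\xrightarrow{A}$ for all $A\in X$. $N_1\approx_{\mathscr F}N_2$ iff they have the same step failure pairs. $\approx^\Delta_{bSTb}$: An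 ST-marking is $(M,U)\in\mathbb N^S\times T^*$, initial $(M_0,\varepsilon)$; $(M,U)\xrightarrow{a^+}(M-{}^\bullet t,Ut)$ iff $\ell(t)=a\in\mathrm{Act}$ and $M[t\rangle$; $(M,U)\xrightarrow{a^{-n}}(M+t^\bullet,U^{-n})$ iff the $n$-th element $t$ of $U$ has label $a$ ($U^{-n}$: with it removed); $(M,U)\xrightarrow{\tau}(M',U)$ iff $M[t\rangle M'$ with $\ell(t)=\tau$. $N_1\approx^\Delta_{bSTb}N_2$ iff there is a relation $\mathcal B$ between ST-markings of $N_1$ and $N_2$ relating the initial ones such that: if $\mathfrak M_1\mathcal B\mathfrak M_2$ and $\mathfrak M_1\xrightarrow{\alpha}\mathfrak M_1'$ then $\mathfrak M_2\Rightarrow\mathfrak M_2^\dagger\xrightarrow{(\alpha)}\mathfrak M_2'$ with $\mathfrak M_1\mathcal B\mathfrak M_2^\dagger$ and $\mathfrak M_1'\mathcal B\mathfrak M_2'$ (here $\Rightarrow$ is the reflexive transitive closure of $\xrightarrow{\tau}$ and $\xrightarrow{(\alpha)}$ means $\xrightarrow{\alpha}$ or, if $\alpha=\tau$, equality), and symmetrically; and if $\mathfrak M_1\mathcal B\mathfrak M_2$ and there is an infinite $\tau$-sequence from $\mathfrak M_1$ all of whose states are related to $\mathfrak M_2$, then there is an infinite $\tau$-sequence from $\mathfrak M_2$ with every state of the first related to every state of the second, and symmetrically. *)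

theory Defs
  imports Main "HOL-Library.Multiset"
begin

text \<open>Petri nets over visible actions of type 'a; the label None plays the role of tau.
  F(s,t) is flow_in s t, F(t,s) is flow_out t s. Markings are functions 's => nat.\<close>

record ('s, 't, 'a) pnet =
  places :: "'s set"
  transitions :: "'t set"
  flow_in :: "'s \<Rightarrow> 't \<Rightarrow> nat"
  flow_out :: "'t \<Rightarrow> 's \<Rightarrow> nat"
  init :: "'s \<Rightarrow> nat"
  lab :: "'t \<Rightarrow> 'a option"

definition petri_net :: "('s, 't, 'a) pnet \<Rightarrow> bool" where
  "petri_net N \<longleftrightarrow>
     (\<forall>s t. flow_in N s t \<noteq> 0 \<longrightarrow> s \<in> places N \<and> t \<in> transitions N) \<and>
     (\<forall>t s. flow_out N t s \<noteq> 0 \<longrightarrow> s \<in> places N \<and> t \<in> transitions N) \<and>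
     (\<forall>s. init N s \<noteq> 0 \<longrightarrow> s \<in> places N)"

definition pre :: "('s, 't, 'a) pnet \<Rightarrow> 't \<Rightarrow> 's \<Rightarrow> nat" where
  "pre N t = (\<lambda>s. flow_in N s t)"

definition post :: "('s, 't, 'a) pnet \<Rightarrow> 't \<Rightarrow> 's \<Rightarrow> nat" where
  "post N t = (\<lambda>s. flow_out N t s)"

definition preM :: "('s, 't, 'a) pnet \<Rightarrow> 't multiset \<Rightarrow> 's \<Rightarrow> nat" where
  "preM N G = (\<lambda>s. \<Sum>t\<in>#G. pre N t s)"

definition postM :: "('s, 't, 'a) pnet \<Rightarrow> 't multiset \<Rightarrow> 's \<Rightarrow> nat" where
  "postM N G = (\<lambda>s. \<Sum>t\<in>#G. post N t s)"

definition fires_step :: "('s, 't, 'a) pnet \<Rightarrow> ('s \<Rightarrow> nat) \<Rightarrow> 't multiset \<Rightarrow> ('s \<Rightarrow> nat) \<Rightarrow> bool" where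
  "fires_step N M G M' \<longleftrightarrow> G \<noteq> {#} \<and> set_mset G \<subseteq> transitions N \<and>
     preM N G \<le> M \<and> M' = (\<lambda>s. M s - preM N G s + postM N G s)"

definition fires_lab :: "('s, 't, 'a) pnet \<Rightarrow> ('s \<Rightarrow> nat) \<Rightarrow> 'a option \<Rightarrow> ('s \<Rightarrow> nat) \<Rightarrow> bool" where
  "fires_lab N M \<alpha> M' \<longleftrightarrow> (\<exists>t. lab N t = \<alpha> \<and> fires_step N M {#t#} M')"

abbreviation tau_steps :: "('s, 't, 'a) pnet \<Rightarrow> ('s \<Rightarrow> nat) \<Rightarrow> ('s \<Rightarrow> nat) \<Rightarrow> bool" where
  "tau_steps N \<equiv> (\<lambda>M M'. fires_lab N M None M')\<^sup>*\<^sup>*"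

fun weak_trace :: "('s, 't, 'a) pnet \<Rightarrow> ('s \<Rightarrow> nat) \<Rightarrow> 'a list \<Rightarrow> ('s \<Rightarrow> nat) \<Rightarrow> bool" where
  "weak_trace N M [] M' \<longleftrightarrow> tau_steps N M M'"
| "weak_trace N M (a # \<sigma>) M' \<longleftrightarrow>
     (\<exists>M1 M2. tau_steps N M M1 \<and> fires_lab N M1 (Some a) M2 \<and> weak_trace N M2 \<sigma> M')"

definition step_enabled :: "('s, 't, 'a) pnet \<Rightarrow> ('s \<Rightarrow> nat) \<Rightarrow> 'a multiset \<Rightarrow> bool" where
  "step_enabled N M A \<longleftrightarrow>
     (\<exists>G M'. (\<forall>t\<in>#G. lab N t \<noteq> None) \<and> image_mset (lab N) G = image_mset Some A \<and>
            fires_step N M G M')"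

definition step_failure_pairs :: "('s, 't, 'a) pnet \<Rightarrow> ('a list \<times> 'a multiset set) set" where
  "step_failure_pairs N = {(\<sigma>, X). finite X \<and> (\<forall>A\<in>X. A \<noteq> {#}) \<and>
     (\<exists>M. weak_trace N (init N) \<sigma> M \<and> \<not> (\<exists>M'. fires_lab N M None M') \<and>
          (\<forall>A\<in>X. \<not> step_enabled N M A))}"

definition step_failures_equiv :: "('s1, 't1, 'a) pnet \<Rightarrow> ('s2, 't2, 'a) pnet \<Rightarrow> bool" where
  "step_failures_equiv N1 N2 \<longleftrightarrow> step_failure_pairs N1 = step_failure_pairs N2"

datatype 'a stlab = Start 'a | Finish 'a nat | STau

type_synonym ('s, 't) stmarking = "('s \<Rightarrow> nat) \<times> 't list"

definition st_markings :: "('s, 't, 'a) pnet \<Rightarrow> ('s, 't) stmarking set" where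
  "st_markings N = {(M, U). (\<forall>s. s \<notin> places N \<longrightarrow> M s = 0) \<and> set U \<subseteq> transitions N}"

text \<open>Finish a n is a^{-n}; the index n is 1-based as in the paper.\<close>
inductive st_step :: "('s, 't, 'a) pnet \<Rightarrow> ('s, 't) stmarking \<Rightarrow> 'a stlab \<Rightarrow> ('s, 't) stmarking \<Rightarrow> bool"
  for N where
  start: "\<lbrakk>t \<in> transitions N; lab N t = Some a; pre N t \<le> M\<rbrakk> \<Longrightarrow>
     st_step N (M, U) (Start a) (\<lambda>s. M s - pre N t s, U @ [t])"
| finish: "\<lbrakk>1 \<le> n; n \<le> length U; lab N (U ! (n - 1)) = Some a\<rbrakk> \<Longrightarrow>
     st_step N (M, U) (Finish a n) (\<lambda>s. M s + post N (U ! (n - 1)) s, take (n - 1) U @ drop n U)"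
| tau: "fires_lab N M None M' \<Longrightarrow> st_step N (M, U) STau (M', U)"

abbreviation st_tau_steps :: "('s, 't, 'a) pnet \<Rightarrow> ('s, 't) stmarking \<Rightarrow> ('s, 't) stmarking \<Rightarrow> bool" where
  "st_tau_steps N \<equiv> (\<lambda>x y. st_step N x STau y)\<^sup>*\<^sup>*"

definition bisim_half ::
  "('s1, 't1, 'a) pnet \<Rightarrow> ('s2, 't2, 'a) pnet \<Rightarrow>
   (('s1, 't1) stmarking \<Rightarrow> ('s2, 't2) stmarking \<Rightarrow> bool) \<Rightarrow> bool" where
  "bisim_half N1 N2 B \<longleftrightarrow>
     (\<forall>m1 m2 \<alpha> m1'. B m1 m2 \<and> st_step N1 m1 \<alpha> m1' \<longrightarrow>
        (\<exists>m2d m2'. st_tau_steps N2 m2 m2d \<and>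
           (st_step N2 m2d \<alpha> m2' \<or> (\<alpha> = STau \<and> m2' = m2d)) \<and>
           B m1 m2d \<and> B m1' m2')) \<and>
     (\<forall>m1 m2 f. B m1 m2 \<and> f 0 = m1 \<and> (\<forall>i. st_step N1 (f i) STau (f (Suc i))) \<and>
        (\<forall>i. B (f i) m2) \<longrightarrow>
        (\<exists>g. g 0 = m2 \<and> (\<forall>i. st_step N2 (g i) STau (g (Suc i))) \<and>
             (\<forall>i j. B (f i) (g j))))"

definition bSTb_div_bisimilar :: "('s1, 't1, 'a) pnet \<Rightarrow> ('s2, 't2, 'a) pnet \<Rightarrow> bool" where
  "bSTb_div_bisimilar N1 N2 \<longleftrightarrow>
     (\<exists>B. (\<forall>m1 m2. B m1 m2 \<longrightarrow> m1 \<in> st_markings N1 \<and> m2 \<in> st_markings N2) \<and>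
          B (init N1, []) (init N2, []) \<and>
          bisim_half N1 N2 B \<and> bisim_half N2 N1 (\<lambda>y x. B x y))"

end

theory Submission
  imports Defs
begin

text \<open>On ST-markings without started transitions an ST-bisimulation is a weak bisimulation
  of the interleaving semantics, because a visible firing is a start immediately followed by its
  finish; hence it preserves weak traces. For refusals, let \<open>M\<^sub>1\<close> be stable and related to
  \<open>M\<^sub>2\<close>. Divergence sensitivity lets the other net move from \<open>M\<^sub>2\<close> to a stable marking
  still related to \<open>M\<^sub>1\<close>, since otherwise an infinite \<open>\<tau>\<close>-run would stay related to the
  stable \<open>M\<^sub>1\<close>. From two related stable markings, a step enabled on one side can be started
  transition by transition; as a marking below a stable one is stable, the other side has to
  answer each start at once, and the transitions it starts form a step with the same labels.\<close>

definition tau_stable :: "('s, 't, 'a) pnet \<Rightarrow> ('s \<Rightarrow> nat) \<Rightarrow> bool" where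
  "tau_stable N M \<longleftrightarrow> \<not> (\<exists>M'. fires_lab N M None M')"

lemma preM_add_mset: "preM N (add_mset t G) = (\<lambda>s. preM N G s + pre N t s)"
  by (simp add: preM_def add.commute)

lemma diff_preM_snoc:
  "(\<lambda>s. M s - preM N (mset L) s - pre N t s) = (\<lambda>s. M s - preM N (mset (L @ [t])) s)"
  by (simp add: preM_add_mset diff_diff_add)

lemma fires_lab_add_marking:
  assumes "fires_lab N M \<alpha> M'"
  shows "fires_lab N (\<lambda>s. M s + K s) \<alpha> (\<lambda>s. M' s + K s)"
proof -
  obtain t where t: "lab N t = \<alpha>" "t \<in> transitions N" "pre N t \<le> M"
    and M': "M' = (\<lambda>s. M s - pre N t s + post N t s)"
    using assms by (auto simp: fires_lab_def fires_step_def preM_def postM_def)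
  have "(\<lambda>s. M' s + K s) = (\<lambda>s. M s + K s - pre N t s + post N t s)"
  proof
    fix s
    have "pre N t s \<le> M s"
      using t(3) by (simp add: le_fun_def)
    then show "M' s + K s = M s + K s - pre N t s + post N t s"
      by (simp add: M')
  qed
  with t show ?thesis
    by (auto simp: fires_lab_def fires_step_def preM_def postM_def le_fun_def intro: trans_le_add1)
qed

lemma tau_steps_add_marking:
  assumes "tau_steps N M M'"
  shows "tau_steps N (\<lambda>s. M s + K s) (\<lambda>s. M' s + K s)"
  using assms
  by (induction rule: rtranclp_induct) (auto intro: rtranclp.rtrancl_into_rtrancl fires_lab_add_marking)

lemma tau_stable_diff:
  assumes "tau_stable N M" and "K \<le> M"
  shows "tau_stable N (\<lambda>s. M s - K s)"
  unfolding tau_stable_def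
proof
  assume "\<exists>M'. fires_lab N (\<lambda>s. M s - K s) None M'"
  then obtain M' where "fires_lab N (\<lambda>s. M s - K s + K s) None (\<lambda>s. M' s + K s)"
    using fires_lab_add_marking by blast
  moreover have "(\<lambda>s. M s - K s + K s) = M"
    using \<open>K \<le> M\<close> by (auto simp: le_fun_def)
  ultimately show False
    using \<open>tau_stable N M\<close> by (auto simp: tau_stable_def)
qed

lemma st_step_STau_iff:
  "st_step N (M, U) STau m' \<longleftrightarrow> (\<exists>M'. m' = (M', U) \<and> fires_lab N M None M')"
  by (auto elim: st_step.cases intro: st_step.tau)

lemma st_tau_steps_iff:
  "st_tau_steps N (M, U) m' \<longleftrightarrow> (\<exists>M'. m' = (M', U) \<and> tau_steps N M M')"
proof
  show "st_tau_steps N (M, U) m' \<Longrightarrow> \<exists>M'. m' = (M', U) \<and> tau_steps N M M'"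
    by (induction rule: rtranclp_induct)
      (auto simp: st_step_STau_iff intro: rtranclp.rtrancl_into_rtrancl)
  have "tau_steps N M M' \<Longrightarrow> st_tau_steps N (M, U) (M', U)" for M'
    by (induction rule: rtranclp_induct)
      (auto simp: st_step_STau_iff intro: rtranclp.rtrancl_into_rtrancl)
  then show "\<exists>M'. m' = (M', U) \<and> tau_steps N M M' \<Longrightarrow> st_tau_steps N (M, U) m'"
    by blast
qed

lemma tau_stable_tau_steps_eq:
  assumes "tau_stable N M" and "tau_steps N M M'"
  shows "M' = M"
  using assms(2,1) by (cases rule: converse_rtranclpE) (auto simp: tau_stable_def)

lemma weak_trace_tau_steps_prefix:
  "tau_steps N M M\<^sub>1 \<Longrightarrow> weak_trace N M\<^sub>1 \<sigma> M' \<Longrightarrow> weak_trace N M \<sigma> M'"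
  by (cases \<sigma>) (auto intro: rtranclp_trans)

lemma weak_trace_tau_steps_suffix:
  "weak_trace N M \<sigma> M' \<Longrightarrow> tau_steps N M' M'' \<Longrightarrow> weak_trace N M \<sigma> M''"
  by (induction N M \<sigma> M' rule: weak_trace.induct) (auto intro: rtranclp_trans)

lemma chain_if_reachable_not_final:
  assumes "\<And>y. r\<^sup>*\<^sup>* x y \<Longrightarrow> \<exists>z. r y z"
  shows "\<exists>f. f 0 = x \<and> (\<forall>i. r (f i) (f (Suc i)))"
proof -
  obtain f where f: "\<And>n. (r\<^sup>*\<^sup>* x (f n) \<and> (n = 0 \<longrightarrow> f n = x)) \<and> r (f n) (f (Suc n))"
    using dependent_nat_choice[of "\<lambda>n y. r\<^sup>*\<^sup>* x y \<and> (n = 0 \<longrightarrow> y = x)" "\<lambda>_. r"] assms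
    by (blast intro: rtranclp.rtrancl_into_rtrancl)
  then show ?thesis by blast
qed

lemma bisim_half_transfer:
  assumes "bisim_half N\<^sub>1 N\<^sub>2 B" "B m\<^sub>1 m\<^sub>2" "st_step N\<^sub>1 m\<^sub>1 \<alpha> m\<^sub>1'"
  obtains m\<^sub>2d m\<^sub>2' where "st_tau_steps N\<^sub>2 m\<^sub>2 m\<^sub>2d"
    "st_step N\<^sub>2 m\<^sub>2d \<alpha> m\<^sub>2' \<or> (\<alpha> = STau \<and> m\<^sub>2' = m\<^sub>2d)" "B m\<^sub>1 m\<^sub>2d" "B m\<^sub>1' m\<^sub>2'"
  using assms unfolding bisim_half_def by blast

lemma bisim_half_divergence:
  assumes "bisim_half N\<^sub>1 N\<^sub>2 B"
    "\<And>i. st_step N\<^sub>1 (f i) STau (f (Suc i))" "\<And>i. B (f i) m\<^sub>2"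
  obtains g where "g 0 = m\<^sub>2" "\<And>i. st_step N\<^sub>2 (g i) STau (g (Suc i))"
  using assms unfolding bisim_half_def by blast

lemma bisim_half_tau_transfer:
  assumes "bisim_half N\<^sub>1 N\<^sub>2 B" "B (M\<^sub>1, U) m\<^sub>2" "fires_lab N\<^sub>1 M\<^sub>1 None M\<^sub>1'"
  shows "\<exists>m\<^sub>2'. st_tau_steps N\<^sub>2 m\<^sub>2 m\<^sub>2' \<and> B (M\<^sub>1', U) m\<^sub>2'"
proof -
  from assms(3) have "st_step N\<^sub>1 (M\<^sub>1, U) STau (M\<^sub>1', U)"
    by (rule st_step.tau)
  then obtain m\<^sub>2d m\<^sub>2' where
    "st_tau_steps N\<^sub>2 m\<^sub>2 m\<^sub>2d" "st_step N\<^sub>2 m\<^sub>2d STau m\<^sub>2' \<or> m\<^sub>2' = m\<^sub>2d" "B (M\<^sub>1', U) m\<^sub>2'"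
    by (rule bisim_half_transfer[OF assms(1,2)]) blast
  then show ?thesis
    by (blast intro: rtranclp.rtrancl_into_rtrancl)
qed

lemma bisim_half_tau_steps:
  assumes "bisim_half N\<^sub>1 N\<^sub>2 B"
  shows "tau_steps N\<^sub>1 M\<^sub>1 M\<^sub>1' \<Longrightarrow> B (M\<^sub>1, []) (M\<^sub>2, []) \<Longrightarrow>
    \<exists>M\<^sub>2'. tau_steps N\<^sub>2 M\<^sub>2 M\<^sub>2' \<and> B (M\<^sub>1', []) (M\<^sub>2', [])"
proof (induction rule: rtranclp_induct)
  case base
  then show ?case by blast
next
  case (step M M')
  then obtain Ma where Ma: "tau_steps N\<^sub>2 M\<^sub>2 Ma" "B (M, []) (Ma, [])"
    by blast
  obtain Me where "tau_steps N\<^sub>2 Ma Me" "B (M', []) (Me, [])"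
    using bisim_half_tau_transfer[OF assms Ma(2) step.hyps(2)] by (auto simp: st_tau_steps_iff)
  with Ma(1) show ?case
    by (blast intro: rtranclp_trans)
qed

lemma bisim_half_visible:
  assumes H: "bisim_half N\<^sub>1 N\<^sub>2 B"
    and fire: "fires_lab N\<^sub>1 M\<^sub>1 (Some a) M\<^sub>1'" and rel: "B (M\<^sub>1, []) (M\<^sub>2, [])"
  shows "\<exists>M\<^sub>2'. weak_trace N\<^sub>2 M\<^sub>2 [a] M\<^sub>2' \<and> B (M\<^sub>1', []) (M\<^sub>2', [])"
proof -
  obtain t where t: "lab N\<^sub>1 t = Some a" "t \<in> transitions N\<^sub>1" "pre N\<^sub>1 t \<le> M\<^sub>1"
    and M\<^sub>1': "M\<^sub>1' = (\<lambda>s. M\<^sub>1 s - pre N\<^sub>1 t s + post N\<^sub>1 t s)"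
    using fire by (auto simp: fires_lab_def fires_step_def preM_def postM_def)
  let ?m\<^sub>1 = "(\<lambda>s. M\<^sub>1 s - pre N\<^sub>1 t s, [t])"
  have "st_step N\<^sub>1 (M\<^sub>1, []) (Start a) ?m\<^sub>1"
    using st_step.start[OF t(2,1,3), of "[]"] by simp
  then obtain m\<^sub>2d m\<^sub>2' where
    start: "st_tau_steps N\<^sub>2 (M\<^sub>2, []) m\<^sub>2d" "st_step N\<^sub>2 m\<^sub>2d (Start a) m\<^sub>2'" "B ?m\<^sub>1 m\<^sub>2'"
    by (rule bisim_half_transfer[OF H rel]) blast
  then obtain Ma t' where Ma: "tau_steps N\<^sub>2 M\<^sub>2 Ma"
    and t': "t' \<in> transitions N\<^sub>2" "lab N\<^sub>2 t' = Some a" "pre N\<^sub>2 t' \<le> Ma"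
    and m\<^sub>2': "m\<^sub>2' = (\<lambda>s. Ma s - pre N\<^sub>2 t' s, [t'])"
    by (auto simp: st_tau_steps_iff elim: st_step.cases)
  have "st_step N\<^sub>1 ?m\<^sub>1 (Finish a 1) (M\<^sub>1', [])"
    using st_step.finish[of 1 "[t]" N\<^sub>1 a] t(1) by (simp add: M\<^sub>1')
  then obtain m\<^sub>2e m\<^sub>2'' where
    finish: "st_tau_steps N\<^sub>2 m\<^sub>2' m\<^sub>2e" "st_step N\<^sub>2 m\<^sub>2e (Finish a 1) m\<^sub>2''" "B (M\<^sub>1', []) m\<^sub>2''"
    by (rule bisim_half_transfer[OF H start(3)]) blast
  then obtain Z where Z: "tau_steps N\<^sub>2 (\<lambda>s. Ma s - pre N\<^sub>2 t' s) Z"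
    and m\<^sub>2'': "m\<^sub>2'' = (\<lambda>s. Z s + post N\<^sub>2 t' s, [])"
    by (auto simp: m\<^sub>2' st_tau_steps_iff elim: st_step.cases)
  have "fires_lab N\<^sub>2 Ma (Some a) (\<lambda>s. Ma s - pre N\<^sub>2 t' s + post N\<^sub>2 t' s)"
    using t' by (auto simp: fires_lab_def fires_step_def preM_def postM_def)
  moreover have "tau_steps N\<^sub>2 (\<lambda>s. Ma s - pre N\<^sub>2 t' s + post N\<^sub>2 t' s) (\<lambda>s. Z s + post N\<^sub>2 t' s)"
    using tau_steps_add_marking[OF Z] .
  ultimately show ?thesis
    using Ma finish(3) m\<^sub>2'' by auto
qed

lemma bisim_half_weak_trace:
  assumes H: "bisim_half N\<^sub>1 N\<^sub>2 B"
  shows "weak_trace N\<^sub>1 M\<^sub>1 \<sigma> M\<^sub>1' \<Longrightarrow> B (M\<^sub>1, []) (M\<^sub>2, []) \<Longrightarrow>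
    \<exists>M\<^sub>2'. weak_trace N\<^sub>2 M\<^sub>2 \<sigma> M\<^sub>2' \<and> B (M\<^sub>1', []) (M\<^sub>2', [])"
proof (induction \<sigma> arbitrary: M\<^sub>1 M\<^sub>2)
  case Nil
  then show ?case using bisim_half_tau_steps[OF H] by simp
next
  case (Cons a \<sigma>)
  then obtain Mx My where
    trace\<^sub>1: "tau_steps N\<^sub>1 M\<^sub>1 Mx" "fires_lab N\<^sub>1 Mx (Some a) My" "weak_trace N\<^sub>1 My \<sigma> M\<^sub>1'"
    by auto
  obtain Mx\<^sub>2 where "tau_steps N\<^sub>2 M\<^sub>2 Mx\<^sub>2" "B (Mx, []) (Mx\<^sub>2, [])"
    using bisim_half_tau_steps[OF H trace\<^sub>1(1) Cons.prems(2)] by blast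
  moreover obtain My\<^sub>2 where "weak_trace N\<^sub>2 Mx\<^sub>2 [a] My\<^sub>2" "B (My, []) (My\<^sub>2, [])"
    using bisim_half_visible[OF H trace\<^sub>1(2) \<open>B (Mx, []) (Mx\<^sub>2, [])\<close>] by blast
  moreover obtain M\<^sub>2' where "weak_trace N\<^sub>2 My\<^sub>2 \<sigma> M\<^sub>2'" "B (M\<^sub>1', []) (M\<^sub>2', [])"
    using Cons.IH[OF trace\<^sub>1(3) \<open>B (My, []) (My\<^sub>2, [])\<close>] by blast
  ultimately show ?case
    by (auto intro: rtranclp_trans weak_trace_tau_steps_prefix)
qed

lemma bisim_half_tau_steps_to_stable:
  assumes H: "bisim_half N\<^sub>1 N\<^sub>2 B" and stable: "tau_stable N\<^sub>2 M\<^sub>2"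
  shows "tau_steps N\<^sub>1 M\<^sub>1 M \<Longrightarrow> B (M\<^sub>1, []) (M\<^sub>2, []) \<Longrightarrow> B (M, []) (M\<^sub>2, [])"
proof (induction rule: rtranclp_induct)
  case base
  then show ?case .
next
  case (step M M')
  obtain m\<^sub>2' where "st_tau_steps N\<^sub>2 (M\<^sub>2, []) m\<^sub>2'" "B (M', []) m\<^sub>2'"
    using bisim_half_tau_transfer[OF H step.IH[OF step.prems] step.hyps(2)] by blast
  with stable show ?case
    by (auto simp: st_tau_steps_iff dest: tau_stable_tau_steps_eq)
qed

lemma bisim_half_reaches_stable:
  assumes H: "bisim_half N\<^sub>1 N\<^sub>2 B" and stable: "tau_stable N\<^sub>2 M\<^sub>2"
    and rel: "B (M\<^sub>1, []) (M\<^sub>2, [])"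
  shows "\<exists>M. tau_steps N\<^sub>1 M\<^sub>1 M \<and> tau_stable N\<^sub>1 M \<and> B (M, []) (M\<^sub>2, [])"
proof (rule ccontr)
  assume "\<not> ?thesis"
  moreover have related: "\<And>M. tau_steps N\<^sub>1 M\<^sub>1 M \<Longrightarrow> B (M, []) (M\<^sub>2, [])"
    using bisim_half_tau_steps_to_stable[OF H stable] rel by blast
  ultimately have "\<And>M. tau_steps N\<^sub>1 M\<^sub>1 M \<Longrightarrow> \<exists>M'. fires_lab N\<^sub>1 M None M'"
    by (auto simp: tau_stable_def)
  then obtain f where f: "f 0 = M\<^sub>1" "\<And>i. fires_lab N\<^sub>1 (f i) None (f (Suc i))"
    using chain_if_reachable_not_final by metis
  have "tau_steps N\<^sub>1 M\<^sub>1 (f i)" for i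
    by (induction i) (use f in \<open>auto intro: rtranclp.rtrancl_into_rtrancl\<close>)
  then have "B (f i, []) (M\<^sub>2, [])" for i
    by (rule related)
  moreover have "st_step N\<^sub>1 (f i, []) STau (f (Suc i), [])" for i
    using f(2) by (rule st_step.tau)
  ultimately obtain g where "g 0 = (M\<^sub>2, [])" "\<And>i. st_step N\<^sub>2 (g i) STau (g (Suc i))"
    using bisim_half_divergence[OF H, of "\<lambda>i. (f i, [])"] by blast
  then have "st_step N\<^sub>2 (M\<^sub>2, []) STau (g 1)"
    by (metis One_nat_def)
  with stable show False
    by (auto simp: st_step_STau_iff tau_stable_def)
qed

lemma bisim_half_starts_from_stable:
  assumes H: "bisim_half N\<^sub>1 N\<^sub>2 B" and stable: "tau_stable N\<^sub>2 M\<^sub>2"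
    and rel: "B (M\<^sub>1, []) (M\<^sub>2, [])"
  shows "set L \<subseteq> transitions N\<^sub>1 \<Longrightarrow> (\<forall>t\<in>set L. lab N\<^sub>1 t \<noteq> None) \<Longrightarrow>
    preM N\<^sub>1 (mset L) \<le> M\<^sub>1 \<Longrightarrow>
    \<exists>L\<^sub>2. B (\<lambda>s. M\<^sub>1 s - preM N\<^sub>1 (mset L) s, L) (\<lambda>s. M\<^sub>2 s - preM N\<^sub>2 (mset L\<^sub>2) s, L\<^sub>2) \<and>
      map (lab N\<^sub>2) L\<^sub>2 = map (lab N\<^sub>1) L \<and> preM N\<^sub>2 (mset L\<^sub>2) \<le> M\<^sub>2 \<and>
      set L\<^sub>2 \<subseteq> transitions N\<^sub>2"
proof (induction L rule: rev_induct)
  case Nil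
  then show ?case
    using rel by (intro exI[of _ "[]"]) (auto simp: preM_def le_fun_def)
next
  case (snoc t L)
  let ?M\<^sub>1 = "\<lambda>s. M\<^sub>1 s - preM N\<^sub>1 (mset L) s"
  have pre_le: "\<And>s. preM N\<^sub>1 (mset L) s + pre N\<^sub>1 t s \<le> M\<^sub>1 s"
    using snoc.prems(3) by (simp add: preM_add_mset le_fun_def)
  then have "preM N\<^sub>1 (mset L) \<le> M\<^sub>1"
    by (auto simp: le_fun_def intro: add_leD1)
  with snoc obtain L\<^sub>2 where
    IH: "B (?M\<^sub>1, L) (\<lambda>s. M\<^sub>2 s - preM N\<^sub>2 (mset L\<^sub>2) s, L\<^sub>2)"
      "map (lab N\<^sub>2) L\<^sub>2 = map (lab N\<^sub>1) L" "preM N\<^sub>2 (mset L\<^sub>2) \<le> M\<^sub>2" "set L\<^sub>2 \<subseteq> transitions N\<^sub>2"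
    by auto
  let ?M\<^sub>2 = "\<lambda>s. M\<^sub>2 s - preM N\<^sub>2 (mset L\<^sub>2) s"
  obtain a where a: "lab N\<^sub>1 t = Some a"
    using snoc.prems(2) by auto
  have "pre N\<^sub>1 t \<le> ?M\<^sub>1"
  proof (rule le_funI)
    fix s
    show "pre N\<^sub>1 t s \<le> ?M\<^sub>1 s"
      using pre_le[of s] by arith
  qed
  then have "st_step N\<^sub>1 (?M\<^sub>1, L) (Start a) (\<lambda>s. ?M\<^sub>1 s - pre N\<^sub>1 t s, L @ [t])"
    using snoc.prems(1) by (intro st_step.start[OF _ a]) simp_all
  then obtain m\<^sub>2d m\<^sub>2' where
    start: "st_tau_steps N\<^sub>2 (?M\<^sub>2, L\<^sub>2) m\<^sub>2d" "st_step N\<^sub>2 m\<^sub>2d (Start a) m\<^sub>2'"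
      "B (\<lambda>s. ?M\<^sub>1 s - pre N\<^sub>1 t s, L @ [t]) m\<^sub>2'"
    by (rule bisim_half_transfer[OF H IH(1)]) blast
  have "tau_stable N\<^sub>2 ?M\<^sub>2"
    using tau_stable_diff[OF stable IH(3)] .
  with start(1) have "m\<^sub>2d = (?M\<^sub>2, L\<^sub>2)"
    by (auto simp: st_tau_steps_iff dest: tau_stable_tau_steps_eq)
  with start(2) obtain t\<^sub>2 where t\<^sub>2: "t\<^sub>2 \<in> transitions N\<^sub>2" "lab N\<^sub>2 t\<^sub>2 = Some a"
    "pre N\<^sub>2 t\<^sub>2 \<le> ?M\<^sub>2" "m\<^sub>2' = (\<lambda>s. ?M\<^sub>2 s - pre N\<^sub>2 t\<^sub>2 s, L\<^sub>2 @ [t\<^sub>2])"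
    by (cases rule: st_step.cases) auto
  have "B (\<lambda>s. M\<^sub>1 s - preM N\<^sub>1 (mset (L @ [t])) s, L @ [t])
      (\<lambda>s. M\<^sub>2 s - preM N\<^sub>2 (mset (L\<^sub>2 @ [t\<^sub>2])) s, L\<^sub>2 @ [t\<^sub>2])"
    using start(3) t\<^sub>2(4) by (simp only: diff_preM_snoc)
  moreover have "preM N\<^sub>2 (mset (L\<^sub>2 @ [t\<^sub>2])) \<le> M\<^sub>2"
  proof (rule le_funI)
    fix s
    have "pre N\<^sub>2 t\<^sub>2 s \<le> M\<^sub>2 s - preM N\<^sub>2 (mset L\<^sub>2) s" "preM N\<^sub>2 (mset L\<^sub>2) s \<le> M\<^sub>2 s"
      using t\<^sub>2(3) IH(3) by (simp_all add: le_fun_def)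
    then show "preM N\<^sub>2 (mset (L\<^sub>2 @ [t\<^sub>2])) s \<le> M\<^sub>2 s"
      by (simp add: preM_add_mset)
  qed
  ultimately show ?case
    using t\<^sub>2(1,2) IH(2,4) a by (intro exI[of _ "L\<^sub>2 @ [t\<^sub>2]"]) auto
qed

lemma bisim_half_step_enabled:
  assumes H: "bisim_half N\<^sub>1 N\<^sub>2 B" and stable: "tau_stable N\<^sub>2 M\<^sub>2"
    and rel: "B (M\<^sub>1, []) (M\<^sub>2, [])" and enabled: "step_enabled N\<^sub>1 M\<^sub>1 A"
  shows "step_enabled N\<^sub>2 M\<^sub>2 A"
proof -
  obtain G M' where G: "\<forall>t\<in>#G. lab N\<^sub>1 t \<noteq> None" "image_mset (lab N\<^sub>1) G = image_mset Some A"
    "fires_step N\<^sub>1 M\<^sub>1 G M'"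
    using enabled unfolding step_enabled_def by blast
  obtain L where L: "mset L = G"
    using ex_mset by blast
  with G have "L \<noteq> []" and L_visible: "\<forall>t\<in>set L. lab N\<^sub>1 t \<noteq> None"
    and L_fires: "set L \<subseteq> transitions N\<^sub>1" "preM N\<^sub>1 (mset L) \<le> M\<^sub>1"
    by (auto simp: fires_step_def)
  from bisim_half_starts_from_stable[OF H stable rel L_fires(1) L_visible L_fires(2)]
  obtain L\<^sub>2 where L\<^sub>2: "map (lab N\<^sub>2) L\<^sub>2 = map (lab N\<^sub>1) L" "preM N\<^sub>2 (mset L\<^sub>2) \<le> M\<^sub>2"
    "set L\<^sub>2 \<subseteq> transitions N\<^sub>2"
    by blast
  have "L\<^sub>2 \<noteq> []"
    using \<open>L \<noteq> []\<close> map_eq_imp_length_eq[OF L\<^sub>2(1)] by auto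
  moreover have "image_mset (lab N\<^sub>2) (mset L\<^sub>2) = image_mset (lab N\<^sub>1) (mset L)"
    using arg_cong[OF L\<^sub>2(1), of mset] by simp
  moreover have "lab N\<^sub>2 ` set L\<^sub>2 = lab N\<^sub>1 ` set L"
    using arg_cong[OF L\<^sub>2(1), of set] by simp
  then have "\<forall>t\<in>#mset L\<^sub>2. lab N\<^sub>2 t \<noteq> None"
    using L_visible by force
  ultimately show ?thesis
    using G(2) L L\<^sub>2(2,3) unfolding step_enabled_def fires_step_def
    by (intro exI[of _ "mset L\<^sub>2"]) auto
qed

lemma bisimulation_step_failure_pairs_subset:
  assumes H\<^sub>1: "bisim_half N\<^sub>1 N\<^sub>2 B" and H\<^sub>2: "bisim_half N\<^sub>2 N\<^sub>1 (\<lambda>y x. B x y)"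
    and rel_init: "B (init N\<^sub>1, []) (init N\<^sub>2, [])"
  shows "step_failure_pairs N\<^sub>1 \<subseteq> step_failure_pairs N\<^sub>2"
proof
  fix p
  assume "p \<in> step_failure_pairs N\<^sub>1"
  then obtain \<sigma> X M\<^sub>1 where p: "p = (\<sigma>, X)" "finite X" "\<forall>A\<in>X. A \<noteq> {#}"
    and trace\<^sub>1: "weak_trace N\<^sub>1 (init N\<^sub>1) \<sigma> M\<^sub>1" and stable\<^sub>1: "tau_stable N\<^sub>1 M\<^sub>1"
    and refuse\<^sub>1: "\<forall>A\<in>X. \<not> step_enabled N\<^sub>1 M\<^sub>1 A"
    unfolding step_failure_pairs_def tau_stable_def by blast
  obtain M\<^sub>2 where trace\<^sub>2: "weak_trace N\<^sub>2 (init N\<^sub>2) \<sigma> M\<^sub>2" and "B (M\<^sub>1, []) (M\<^sub>2, [])"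
    using bisim_half_weak_trace[OF H\<^sub>1 trace\<^sub>1 rel_init] by blast
  then obtain M\<^sub>2' where "tau_steps N\<^sub>2 M\<^sub>2 M\<^sub>2'" "tau_stable N\<^sub>2 M\<^sub>2'" "B (M\<^sub>1, []) (M\<^sub>2', [])"
    using bisim_half_reaches_stable[OF H\<^sub>2 stable\<^sub>1] by blast
  moreover have "\<forall>A\<in>X. \<not> step_enabled N\<^sub>2 M\<^sub>2' A"
    using refuse\<^sub>1 bisim_half_step_enabled[OF H\<^sub>2 stable\<^sub>1] \<open>B (M\<^sub>1, []) (M\<^sub>2', [])\<close> by blast
  ultimately show "p \<in> step_failure_pairs N\<^sub>2"
    using p trace\<^sub>2 weak_trace_tau_steps_suffix
    unfolding step_failure_pairs_def tau_stable_def by blast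
qed

theorem proposition3p8:
  fixes N1 :: "('s1, 't1, 'a) pnet" and N2 :: "('s2, 't2, 'a) pnet"
  assumes "petri_net N1" and "petri_net N2"
    and "bSTb_div_bisimilar N1 N2"
  shows "step_failures_equiv N1 N2"
proof -
  obtain B where rel_init: "B (init N1, []) (init N2, [])"
    and H\<^sub>1: "bisim_half N1 N2 B" and H\<^sub>2: "bisim_half N2 N1 (\<lambda>y x. B x y)"
    using assms(3) unfolding bSTb_div_bisimilar_def by blast
  have "step_failure_pairs N1 \<subseteq> step_failure_pairs N2"
    using H\<^sub>1 H\<^sub>2 rel_init by (rule bisimulation_step_failure_pairs_subset)
  moreover have "step_failure_pairs N2 \<subseteq> step_failure_pairs N1"
    using bisimulation_step_failure_pairs_subset[of N2 N1 "\<lambda>y x. B x y"] H\<^sub>1 H\<^sub>2 rel_init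
    by simp
  ultimately show ?thesis
    unfolding step_failures_equiv_def by blast
qed

end
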